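(* Let $2<\alpha<3$. There exists a positive constant $\widetilde C$ such that for all curves $\gamma\in C^\infty(\mathbb R/\mathbb Z,\mathbb R^n)$, all integers $l\ge0$ and all real $m\ge0$, $$\|\partial^{l+3}\gamma\|_{H^{m+\alpha-2}}\le\widetilde C\,\|\partial^lQ^\alpha\gamma\|_{H^m}.$$
   Context: $Q^\alpha\gamma(x)=\lim_{\varepsilon\downarrow0}\int_{|w|\in[\varepsilon,\frac12]}\Big(2\frac{\gamma(x+w)-\gamma(x)-w\dot\gamma(x)}{w^2}-\ddot\gamma(x)\Big)\frac{\mathrm dw}{|w|^\alpha}$. For $s\ge0$, $\|f\|_{H^s}^2=\sum_{k\in\mathbb Z}(1+k^2)^s|\hat f(k)|^2$ with $\hat f(k)=\int_0^1f(x)e^{-2\pi ikx}\,\mathrm dx$. *)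

theory Defs
  imports "HOL-Analysis.Analysis"
begin

definition dn :: "nat \<Rightarrow> (real \<Rightarrow> real^'n) \<Rightarrow> real \<Rightarrow> real^'n" where
  "dn k f = ((\<lambda>g x. vector_derivative g (at x)) ^^ k) f"

definition smooth_closed_curve :: "(real \<Rightarrow> real^'n) \<Rightarrow> bool" where
  "smooth_closed_curve \<gamma> \<longleftrightarrow> (\<forall>x. \<gamma> (x + 1) = \<gamma> x) \<and>
     (\<forall>k x. (dn k \<gamma> has_vector_derivative dn (Suc k) \<gamma> x) (at x))"

definition Qop :: "real \<Rightarrow> (real \<Rightarrow> real^'n) \<Rightarrow> real \<Rightarrow> real^'n" where
  "Qop \<alpha> \<gamma> x = Lim (at_right 0) (\<lambda>\<epsilon>.
     integral {w. \<epsilon> \<le> \<bar>w\<bar> \<and> \<bar>w\<bar> \<le> 1/2}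
       (\<lambda>w. (1 / \<bar>w\<bar> powr \<alpha>) *\<^sub>R
          ((2 / w\<^sup>2) *\<^sub>R (\<gamma> (x + w) - \<gamma> x - w *\<^sub>R dn 1 \<gamma> x) - dn 2 \<gamma> x)))"

definition fourier_coeff :: "(real \<Rightarrow> real^'n) \<Rightarrow> int \<Rightarrow> 'n \<Rightarrow> complex" where
  "fourier_coeff f k i = integral {0..1}
     (\<lambda>x. complex_of_real (f x $ i) * exp (- (2 * of_real pi * \<i> * of_int k * of_real x)))"

definition fourier_coeff_norm_sq :: "(real \<Rightarrow> real^'n) \<Rightarrow> int \<Rightarrow> real" where
  "fourier_coeff_norm_sq f k = (\<Sum>i\<in>UNIV. (cmod (fourier_coeff f k i))\<^sup>2)"

definition Hs_norm :: "real \<Rightarrow> (real \<Rightarrow> real^'n) \<Rightarrow> ereal" where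
  "Hs_norm s f =
    (let w = (\<lambda>k::int. (1 + (real_of_int k)\<^sup>2) powr s * fourier_coeff_norm_sq f k)
     in if w summable_on UNIV then ereal (sqrt (infsum w UNIV)) else \<infinity>)"

end

theory Submission
  imports Defs "HOL-Library.Periodic_Fun"
begin

text \<open>
  \<open>Q\<^sup>\<alpha>\<close> is translation invariant, so it acts on Fourier modes by a multiplier. Folding the
  principal value integral onto \<open>w \<in> (0, 1/2]\<close>, where the first-order terms cancel, shows that
  the \<open>k\<close>-th Fourier coefficient of \<open>Q\<^sup>\<alpha> f\<close> is \<open>\<lambda>\<^sub>k\<close> times that of \<open>f\<close>, where \<open>\<lambda>\<^sub>k\<close> is
  the integral over \<open>(0, 1/2]\<close> of \<open>2 w powr (-\<alpha>) * ((2 cos (2\<pi>kw) - 2) / w\<^sup>2 + 4\<pi>\<^sup>2k\<^sup>2)\<close>.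
  This integrand is non-negative, and on \<open>[1/(3|k|), 1/(2|k|)]\<close> it is at least
  \<open>2 (4\<pi>\<^sup>2 - 36) |k| powr (\<alpha> + 2)\<close>, whence \<open>\<lambda>\<^sub>k \<ge> (4\<pi>\<^sup>2 - 36)/3 * |k| powr (\<alpha> + 1)\<close>.
  As \<open>Q\<^sup>\<alpha>\<close> commutes with differentiation and differentiation multiplies the \<open>k\<close>-th coefficient
  by \<open>2\<pi>ik\<close>, the estimate reduces to \<open>(1 + k\<^sup>2) powr (\<alpha> - 2) * k\<^sup>6 \<le> 2 powr (\<alpha> - 2) * |k| powr (2\<alpha> + 2)\<close>.

  Analytically, a fourth-order Taylor bound makes the folded integrand \<open>O(w powr (2 - \<alpha>))\<close>;
  this gives the principal value, uniform convergence of the truncations at rate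
  \<open>\<epsilon> powr (3 - \<alpha>)\<close>, and thereby the passage to the limit in Fourier coefficients and in
  derivatives.
\<close>

section \<open>Smooth closed curves\<close>

lemma dn_0 [simp]: "dn 0 f = f"
  by (simp add: dn_def)

lemma dn_Suc: "dn (Suc k) f = (\<lambda>x. vector_derivative (dn k f) (at x))"
  by (simp add: dn_def)

lemma dn_add: "dn (a + b) f = dn a (dn b f)"
  by (simp add: dn_def funpow_add)

lemma smooth_closed_curve_derivative:
  "smooth_closed_curve f \<Longrightarrow> (dn k f has_vector_derivative dn (Suc k) f x) (at x)"
  by (simp add: smooth_closed_curve_def)

lemma smooth_closed_curve_derivative_compose:
  assumes "smooth_closed_curve f" and "(g has_real_derivative g') (at t)"
  shows "((\<lambda>t. dn k f (g t)) has_vector_derivative g' *\<^sub>R dn (Suc k) f (g t)) (at t)"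
  using vector_diff_chain_at[OF assms(2)[unfolded has_real_derivative_iff_has_vector_derivative]
      smooth_closed_curve_derivative[OF assms(1)]]
  by (simp add: o_def)

lemma smooth_closed_curve_continuous:
  "smooth_closed_curve f \<Longrightarrow> continuous_on S (dn k f)"
  by (metis continuous_at_imp_continuous_on has_vector_derivative_continuous
      smooth_closed_curve_derivative)

lemma smooth_closed_curve_continuous_compose:
  "smooth_closed_curve f \<Longrightarrow> continuous_on S a \<Longrightarrow> continuous_on S (\<lambda>p. dn k f (a p))"
  using continuous_on_compose2[OF smooth_closed_curve_continuous] by blast

lemma smooth_closed_curve_periodic:
  assumes sc: "smooth_closed_curve f"
  shows "dn k f (x + 1) = dn k f x"
proof (induction k arbitrary: x)
  case 0
  then show ?case using sc by (simp add: smooth_closed_curve_def)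
next
  case (Suc k)
  have "((\<lambda>t. t + 1) has_real_derivative 1) (at x)"
    by (auto intro!: derivative_eq_intros)
  from smooth_closed_curve_derivative_compose[OF sc this, of k]
  have "((\<lambda>t. dn k f (t + 1)) has_vector_derivative dn (Suc k) f (x + 1)) (at x)"
    by simp
  moreover have "(\<lambda>t. dn k f (t + 1)) = dn k f"
    using Suc by auto
  ultimately show ?case
    using smooth_closed_curve_derivative[OF sc] vector_derivative_unique_at by metis
qed

lemma smooth_closed_curve_dn:
  assumes "smooth_closed_curve f"
  shows "smooth_closed_curve (dn j f)"
  unfolding smooth_closed_curve_def
  using smooth_closed_curve_periodic[OF assms]
    smooth_closed_curve_derivative[OF assms, of "_ + j"]
  by (simp add: dn_add[symmetric])

lemma periodic_continuous_bounded:
  fixes g :: "real \<Rightarrow> 'a::real_normed_vector"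
  assumes "continuous_on {0..1} g" and "\<And>x. g (x + 1) = g x"
  shows "\<exists>B. \<forall>x. norm (g x) \<le> B"
proof -
  interpret periodic_fun_simple' g
    by unfold_locales (rule assms(2))
  obtain B where B: "\<And>y. y \<in> g ` {0..1} \<Longrightarrow> norm y \<le> B"
    using compact_continuous_image[OF assms(1)] compact_imp_bounded bounded_iff
    by (metis compact_Icc)
  have "norm (g x) \<le> B" for x
  proof -
    have "g x = g (frac x + of_int \<lfloor>x\<rfloor>)"
      by (simp add: frac_def)
    also have "\<dots> = g (frac x)"
      by (rule plus_of_int)
    finally show ?thesis
      using B frac_ge_0 frac_lt_1 by (metis atLeastAtMost_iff image_eqI less_imp_le)
  qed
  then show ?thesis by blast
qed

lemma smooth_closed_curve_bounded:
  "smooth_closed_curve f \<Longrightarrow> \<exists>B. \<forall>x. norm (dn k f x) \<le> B"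
  by (intro periodic_continuous_bounded smooth_closed_curve_continuous
      smooth_closed_curve_periodic)

section \<open>Taylor bounds\<close>

lemma Taylor_remainder_bound:
  fixes f :: "real \<Rightarrow> 'a::banach"
  assumes "0 < p" and "Df 0 = f"
    and "\<And>m t. m < p \<Longrightarrow> a \<le> t \<Longrightarrow> t \<le> b \<Longrightarrow>
      (Df m has_vector_derivative Df (Suc m) t) (at t within {a..b})"
    and "a \<le> b" and M: "\<And>t. a \<le> t \<Longrightarrow> t \<le> b \<Longrightarrow> norm (Df p t) \<le> M"
  shows "norm (f b - (\<Sum>i<p. ((b - a) ^ i / fact i) *\<^sub>R Df i a)) \<le> M * (b - a) ^ p / fact p"
proof -
  let ?w = "\<lambda>t. (b - t) ^ (p - 1) / fact (p - 1)"
  have rem: "((\<lambda>t. ?w t *\<^sub>R Df p t) has_integral f b - (\<Sum>i<p. ((b - a) ^ i / fact i) *\<^sub>R Df i a)) {a..b}"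
    by (rule Taylor_has_integral[OF assms(1-4)])
  have "((\<lambda>t. M * ?w t) has_integral (- M * (b - b) ^ p / fact p) - (- M * (b - a) ^ p / fact p)) {a..b}"
  proof (rule fundamental_theorem_of_calculus[OF \<open>a \<le> b\<close>])
    fix t
    have "fact p = real p * fact (p - 1)"
      using \<open>0 < p\<close> by (metis fact_reduce of_nat_fact of_nat_mult)
    then show "((\<lambda>t. - M * (b - t) ^ p / fact p) has_vector_derivative M * ?w t) (at t within {a..b})"
      using \<open>0 < p\<close>
      by (auto intro!: derivative_eq_intros simp: has_real_derivative_iff_has_vector_derivative[symmetric])
  qed
  then have poly: "((\<lambda>t. M * ?w t) has_integral M * (b - a) ^ p / fact p) {a..b}"
    using \<open>0 < p\<close> by (simp add: power_0_left)
  have "norm (integral {a..b} (\<lambda>t. ?w t *\<^sub>R Df p t)) \<le> integral {a..b} (\<lambda>t. M * ?w t)"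
  proof (rule Henstock_Kurzweil_Integration.integral_norm_bound_integral)
    show "norm (?w t *\<^sub>R Df p t) \<le> M * ?w t" if "t \<in> {a..b}" for t
      using M[of t] that by (simp add: divide_right_mono mult_left_mono mult.commute[of M])
  qed (use rem poly in blast)+
  then show ?thesis
    using integral_unique[OF rem] integral_unique[OF poly] by simp
qed

lemma smooth_closed_curve_Taylor:
  assumes sc: "smooth_closed_curve f" and "0 < p" and M: "\<And>x. norm (dn p f x) \<le> M"
  shows "norm (f (x + h) - (\<Sum>i<p. (h ^ i / fact i) *\<^sub>R dn i f x)) \<le> \<bar>h\<bar> ^ p * M / fact p"
proof -
  define Df where "Df m t = h ^ m *\<^sub>R dn m f (x + t * h)" for m t
  have "norm (f (x + 1 * h) - (\<Sum>i<p. ((1 - 0) ^ i / fact i) *\<^sub>R Df i 0))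
    \<le> \<bar>h\<bar> ^ p * M * (1 - 0) ^ p / fact p"
  proof (rule Taylor_remainder_bound[OF \<open>0 < p\<close>])
    show "Df 0 = (\<lambda>t. f (x + t * h))"
      by (rule ext) (simp add: Df_def)
    show "(Df m has_vector_derivative Df (Suc m) t) (at t within {0..1})" for m t
    proof -
      have "((\<lambda>t. x + t * h) has_real_derivative h) (at t)"
        by (auto intro!: derivative_eq_intros)
      from smooth_closed_curve_derivative_compose[OF sc this, of m]
      have "(Df m has_vector_derivative Df (Suc m) t) (at t)"
        unfolding Df_def
        by (auto intro!: derivative_eq_intros)
      then show ?thesis
        by (rule has_vector_derivative_at_within)
    qed
    show "norm (Df p t) \<le> \<bar>h\<bar> ^ p * M" for t
      using M by (simp add: Df_def power_abs mult_left_mono)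
  qed simp
  then show ?thesis
    by (simp add: Df_def)
qed

lemma smooth_closed_curve_second_difference:
  assumes sc: "smooth_closed_curve f" and M: "\<And>x. norm (dn 4 f x) \<le> M"
  shows "norm (f (x + h) + f (x - h) - 2 *\<^sub>R f x - h\<^sup>2 *\<^sub>R dn 2 f x) \<le> M * h ^ 4 / 12"
proof -
  let ?T = "\<lambda>h. \<Sum>i<4. (h ^ i / fact i) *\<^sub>R dn i f x"
  have T: "?T h = f x + h *\<^sub>R dn 1 f x + (h\<^sup>2 / 2) *\<^sub>R dn 2 f x + (h ^ 3 / 6) *\<^sub>R dn 3 f x" for h
    by (simp add: eval_nat_numeral fact_numeral)
  have "f (x + h) + f (x - h) - 2 *\<^sub>R f x - h\<^sup>2 *\<^sub>R dn 2 f x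
      = (f (x + h) - ?T h) + (f (x + - h) - ?T (- h))"
    unfolding T by (simp add: algebra_simps scaleR_2 flip: scaleR_left_distrib)
  also have "norm \<dots> \<le> \<bar>h\<bar> ^ 4 * M / fact 4 + \<bar>- h\<bar> ^ 4 * M / fact 4"
    by (intro norm_triangle_le add_mono smooth_closed_curve_Taylor[OF sc _ M]) auto
  finally show ?thesis
    by (simp add: fact_numeral power_even_abs_numeral)
qed

section \<open>Folding the principal value integral\<close>

text \<open>The integrands of \<open>Qop\<close> at \<open>w\<close> and at \<open>-w\<close>, added: the first-order terms cancel.\<close>
definition Qsym :: "real \<Rightarrow> (real \<Rightarrow> real^'n) \<Rightarrow> real \<Rightarrow> real \<Rightarrow> real^'n" where
  "Qsym \<alpha> f x w =
     (2 * w powr (-\<alpha>)) *\<^sub>R ((1 / w\<^sup>2) *\<^sub>R (f (x + w) + f (x - w) - 2 *\<^sub>R f x) - dn 2 f x)"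

definition Qop_trunc :: "real \<Rightarrow> real \<Rightarrow> (real \<Rightarrow> real^'n) \<Rightarrow> real \<Rightarrow> real^'n" where
  "Qop_trunc \<alpha> \<epsilon> f x = integral {\<epsilon>..1/2} (Qsym \<alpha> f x)"

lemma Qop_integrand_symmetrize:
  fixes f :: "real \<Rightarrow> real^'n"
  assumes "w > 0"
  shows "(1 / \<bar>w\<bar> powr \<alpha>) *\<^sub>R ((2 / w\<^sup>2) *\<^sub>R (f (x + w) - f x - w *\<^sub>R dn 1 f x) - dn 2 f x)
       + (1 / \<bar>-w\<bar> powr \<alpha>) *\<^sub>R ((2 / (-w)\<^sup>2) *\<^sub>R (f (x + -w) - f x - (-w) *\<^sub>R dn 1 f x) - dn 2 f x)
       = Qsym \<alpha> f x w"
  using assms unfolding Qsym_def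
  by (simp add: vec_eq_iff powr_minus_divide field_simps)

lemma Qsym_bound:
  fixes f :: "real \<Rightarrow> real^'n"
  assumes sc: "smooth_closed_curve f" and M: "\<And>x. norm (dn 4 f x) \<le> M" and "0 \<le> w"
  shows "norm (Qsym \<alpha> f x w) \<le> M / 6 * w powr (2 - \<alpha>)"
proof (cases "w = 0")
  case True
  then show ?thesis by (simp add: Qsym_def)
next
  case False
  then have w: "w > 0" using \<open>0 \<le> w\<close> by auto
  let ?D = "f (x + w) + f (x - w) - 2 *\<^sub>R f x - w\<^sup>2 *\<^sub>R dn 2 f x"
  have "norm (Qsym \<alpha> f x w) = 2 * w powr (-\<alpha>) / w\<^sup>2 * norm ?D"
  proof -
    have "(1 / w\<^sup>2) *\<^sub>R (f (x + w) + f (x - w) - 2 *\<^sub>R f x) - dn 2 f x = (1 / w\<^sup>2) *\<^sub>R ?D"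
      using w by (simp add: algebra_simps)
    then show ?thesis
      unfolding Qsym_def using w by simp
  qed
  also have "\<dots> \<le> 2 * w powr (-\<alpha>) / w\<^sup>2 * (M * w ^ 4 / 12)"
    using smooth_closed_curve_second_difference[OF sc M] w by (intro mult_left_mono) auto
  also have "\<dots> = M / 6 * (w powr 2 * w powr (-\<alpha>))"
    using w by (simp add: powr_numeral field_simps power2_eq_square eval_nat_numeral)
  finally show ?thesis
    by (simp add: powr_add[symmetric])
qed

lemma continuous_on_Qsym:
  fixes f :: "real \<Rightarrow> real^'n"
  assumes sc: "smooth_closed_curve f" and S: "\<And>p. p \<in> S \<Longrightarrow> snd p > 0"
  shows "continuous_on S (\<lambda>p. Qsym \<alpha> f (fst p) (snd p))"
proof -
  note dn = smooth_closed_curve_continuous_compose[OF sc]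
  have "\<forall>p\<in>S. snd p \<noteq> 0"
    using S by force
  then show ?thesis
    unfolding Qsym_def using S
    by (intro continuous_intros dn[where k=0, simplified] dn) auto
qed

lemma continuous_on_Qsym_right:
  fixes f :: "real \<Rightarrow> real^'n"
  assumes sc: "smooth_closed_curve f" and S: "\<And>w. w \<in> S \<Longrightarrow> w > 0"
  shows "continuous_on S (Qsym \<alpha> f x)"
proof -
  have "continuous_on (Pair x ` S) (\<lambda>p. Qsym \<alpha> f (fst p) (snd p))"
    using S by (intro continuous_on_Qsym[OF sc]) auto
  from continuous_on_compose2[OF this continuous_on_Pair[OF continuous_on_const continuous_on_id]]
  show ?thesis
    by simp
qed

lemma Qsym_integrable:
  fixes f :: "real \<Rightarrow> real^'n"
  assumes sc: "smooth_closed_curve f" and "\<alpha> < 3"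
  shows "Qsym \<alpha> f x integrable_on {0..1/2}"
proof -
  obtain M where M: "\<And>x. norm (dn 4 f x) \<le> M"
    using smooth_closed_curve_bounded[OF sc] by blast
  have "Qsym \<alpha> f x integrable_on {0<..1/2}"
  proof (rule measurable_bounded_by_integrable_imp_integrable)
    show "Qsym \<alpha> f x \<in> borel_measurable (lebesgue_on {0<..1/2})"
      by (rule continuous_imp_measurable_on_sets_lebesgue)
        (auto intro: continuous_on_Qsym_right[OF sc])
    show "(\<lambda>w. M / 6 * w powr (2 - \<alpha>)) integrable_on {0<..1/2}"
      using integrable_cmul[OF integrable_on_powr_from_0'[of "2 - \<alpha>" "1/2"], of "M/6"] \<open>\<alpha> < 3\<close>
      by simp
    show "norm (Qsym \<alpha> f x w) \<le> M / 6 * w powr (2 - \<alpha>)" if "w \<in> {0<..1/2}" for w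
      using Qsym_bound[OF sc M] that by auto
  qed auto
  then show ?thesis
    by (rule integrable_spike_set) (auto intro: negligible_subset[of "{0}"])
qed

lemma Qsym_tail_bound:
  fixes f :: "real \<Rightarrow> real^'n"
  assumes sc: "smooth_closed_curve f" and "\<alpha> < 3" and M: "\<And>x. norm (dn 4 f x) \<le> M"
    and "0 < \<epsilon>" "\<epsilon> \<le> 1/2"
  shows "norm (integral {0..1/2} (Qsym \<alpha> f x) - Qop_trunc \<alpha> \<epsilon> f x)
         \<le> M / (6 * (3 - \<alpha>)) * \<epsilon> powr (3 - \<alpha>)"
proof -
  have I: "Qsym \<alpha> f x integrable_on {0..1/2}"
    using Qsym_integrable[OF sc \<open>\<alpha> < 3\<close>] .
  have "integral {0..\<epsilon>} (Qsym \<alpha> f x) + Qop_trunc \<alpha> \<epsilon> f x = integral {0..1/2} (Qsym \<alpha> f x)"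
    unfolding Qop_trunc_def using assms(4,5) I
    by (intro Henstock_Kurzweil_Integration.integral_combine) auto
  then have tail: "integral {0..1/2} (Qsym \<alpha> f x) - Qop_trunc \<alpha> \<epsilon> f x = integral {0..\<epsilon>} (Qsym \<alpha> f x)"
    by (simp add: algebra_simps)
  have "((\<lambda>w. w powr (2 - \<alpha>)) has_integral (\<epsilon> powr (2 - \<alpha> + 1) / (2 - \<alpha> + 1))) {0..\<epsilon>}"
    using assms(2,4) by (intro has_integral_powr_from_0) auto
  from has_integral_mult_right[OF this, of "M / 6"]
  have majorant: "((\<lambda>w. M / 6 * w powr (2 - \<alpha>)) has_integral M / (6 * (3 - \<alpha>)) * \<epsilon> powr (3 - \<alpha>)) {0..\<epsilon>}"
    by (simp add: algebra_simps)
  have "norm (integral {0..\<epsilon>} (Qsym \<alpha> f x)) \<le> integral {0..\<epsilon>} (\<lambda>w. M / 6 * w powr (2 - \<alpha>))"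
  proof (rule Henstock_Kurzweil_Integration.integral_norm_bound_integral)
    show "Qsym \<alpha> f x integrable_on {0..\<epsilon>}"
      by (rule integrable_on_subinterval[OF I]) (use assms(5) in auto)
    show "norm (Qsym \<alpha> f x w) \<le> M / 6 * w powr (2 - \<alpha>)" if "w \<in> {0..\<epsilon>}" for w
      using Qsym_bound[OF sc M] that by auto
  qed (use majorant in blast)
  then show ?thesis
    unfolding tail integral_unique[OF majorant] .
qed

lemma Qop_trunc_eq_integral:
  fixes f :: "real \<Rightarrow> real^'n"
  assumes sc: "smooth_closed_curve f" and \<epsilon>: "0 < \<epsilon>" "\<epsilon> \<le> 1/2"
  shows "Qop_trunc \<alpha> \<epsilon> f x = integral {w. \<epsilon> \<le> \<bar>w\<bar> \<and> \<bar>w\<bar> \<le> 1/2}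
     (\<lambda>w. (1 / \<bar>w\<bar> powr \<alpha>) *\<^sub>R ((2 / w\<^sup>2) *\<^sub>R (f (x + w) - f x - w *\<^sub>R dn 1 f x) - dn 2 f x))"
proof -
  define g where "g w = (1 / \<bar>w\<bar> powr \<alpha>) *\<^sub>R ((2 / w\<^sup>2) *\<^sub>R (f (x + w) - f x - w *\<^sub>R dn 1 f x) - dn 2 f x)"
    for w
  have g_cont: "continuous_on T g" if "0 \<notin> T" for T
  proof -
    have "continuous_on T (\<lambda>w. f (x + w))"
      using smooth_closed_curve_continuous_compose[OF sc, of T "\<lambda>w. x + w" 0]
      by (simp add: continuous_intros)
    then show ?thesis
      unfolding g_def using that by (intro continuous_intros) auto
  qed
  have "integral {w. \<epsilon> \<le> \<bar>w\<bar> \<and> \<bar>w\<bar> \<le> 1/2} g = integral {-(1/2)..-\<epsilon>} g + integral {\<epsilon>..1/2} g"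
  proof -
    have "{w. \<epsilon> \<le> \<bar>w\<bar> \<and> \<bar>w\<bar> \<le> 1/2} = {-(1/2)..-\<epsilon>} \<union> {\<epsilon>..1/2}"
      using \<epsilon> by auto
    then show ?thesis
      using \<epsilon> by (simp add: integral_Un integrable_continuous_interval g_cont)
  qed
  also have "integral {-(1/2)..-\<epsilon>} g = integral {\<epsilon>..1/2} (\<lambda>w. g (-w))"
    using Henstock_Kurzweil_Integration.integral_reflect_real[of "1/2" \<epsilon> "\<lambda>w. g (-w)"] by simp
  also have "integral {\<epsilon>..1/2} (\<lambda>w. g (-w)) + integral {\<epsilon>..1/2} g = integral {\<epsilon>..1/2} (\<lambda>w. g w + g (-w))"
  proof -
    have "continuous_on {\<epsilon>..1/2} (\<lambda>w. g (-w))"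
      using \<epsilon> by (intro continuous_on_compose2[OF g_cont[of "{-(1/2)..-\<epsilon>}"]] continuous_intros) auto
    then show ?thesis
      using \<epsilon> g_cont[of "{\<epsilon>..1/2}"]
      by (subst integral_add) (auto intro: integrable_continuous_interval)
  qed
  also have "\<dots> = Qop_trunc \<alpha> \<epsilon> f x"
    unfolding Qop_trunc_def g_def using \<epsilon>
    by (intro integral_cong Qop_integrand_symmetrize) auto
  finally show ?thesis
    by (simp add: g_def)
qed

lemma Qop_eq_integral:
  fixes f :: "real \<Rightarrow> real^'n"
  assumes sc: "smooth_closed_curve f" and "\<alpha> < 3"
  shows "Qop \<alpha> f x = integral {0..1/2} (Qsym \<alpha> f x)"
proof -
  obtain M where M: "\<And>x. norm (dn 4 f x) \<le> M"
    using smooth_closed_curve_bounded[OF sc] by blast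
  let ?J = "integral {0..1/2} (Qsym \<alpha> f x)"
  have bound: "norm (Qop_trunc \<alpha> \<epsilon> f x - ?J) \<le> M / (6 * (3 - \<alpha>)) * \<epsilon> powr (3 - \<alpha>)"
    if "\<epsilon> \<in> {0<..<1/2}" for \<epsilon>
    using Qsym_tail_bound[OF sc \<open>\<alpha> < 3\<close> M, of \<epsilon> x] that by (simp add: norm_minus_commute)
  have "\<forall>\<^sub>F \<epsilon> in at_right (0::real). 0 \<le> \<epsilon>"
    by (rule eventually_at_rightI[of 0 1]) auto
  then have "((\<lambda>\<epsilon>. M / (6 * (3 - \<alpha>)) * \<epsilon> powr (3 - \<alpha>)) \<longlongrightarrow> M / (6 * (3 - \<alpha>)) * 0) (at_right 0)"
    using \<open>\<alpha> < 3\<close> by (intro tendsto_intros tendsto_zero_powrI) auto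
  then have "((\<lambda>\<epsilon>. Qop_trunc \<alpha> \<epsilon> f x - ?J) \<longlongrightarrow> 0) (at_right 0)"
    by (intro Lim_null_comparison[OF eventually_at_rightI[of 0 "1/2", OF bound]]) simp_all
  then have "((\<lambda>\<epsilon>. Qop_trunc \<alpha> \<epsilon> f x) \<longlongrightarrow> ?J) (at_right 0)"
    by (simp add: Lim_null[symmetric])
  then have "((\<lambda>\<epsilon>. integral {w. \<epsilon> \<le> \<bar>w\<bar> \<and> \<bar>w\<bar> \<le> 1/2}
     (\<lambda>w. (1 / \<bar>w\<bar> powr \<alpha>) *\<^sub>R ((2 / w\<^sup>2) *\<^sub>R (f (x + w) - f x - w *\<^sub>R dn 1 f x) - dn 2 f x)))
       \<longlongrightarrow> ?J) (at_right 0)"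
    by (rule Lim_transform_eventually, intro eventually_at_rightI[of 0 "1/2"] Qop_trunc_eq_integral[OF sc])
      simp_all
  then show ?thesis
    unfolding Qop_def by (intro tendsto_Lim) auto
qed

lemma Qop_trunc_approx:
  fixes f :: "real \<Rightarrow> real^'n"
  assumes sc: "smooth_closed_curve f" and "\<alpha> < 3"
  obtains K where "\<And>x \<epsilon>. 0 < \<epsilon> \<Longrightarrow> \<epsilon> \<le> 1/2 \<Longrightarrow>
    norm (Qop_trunc \<alpha> \<epsilon> f x - Qop \<alpha> f x) \<le> K * \<epsilon> powr (3 - \<alpha>)"
proof -
  obtain M where M: "\<And>x. norm (dn 4 f x) \<le> M"
    using smooth_closed_curve_bounded[OF sc] by blast
  show ?thesis
  proof (rule that)
    fix x \<epsilon> :: real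
    assume "0 < \<epsilon>" "\<epsilon> \<le> 1/2"
    from Qsym_tail_bound[OF sc \<open>\<alpha> < 3\<close> M this, of x]
    show "norm (Qop_trunc \<alpha> \<epsilon> f x - Qop \<alpha> f x) \<le> M / (6 * (3 - \<alpha>)) * \<epsilon> powr (3 - \<alpha>)"
      unfolding Qop_eq_integral[OF sc \<open>\<alpha> < 3\<close>] by (subst norm_minus_commute)
  qed
qed

lemma Qop_trunc_uniform_limit:
  fixes f :: "real \<Rightarrow> real^'n"
  assumes sc: "smooth_closed_curve f" and "\<alpha> < 3"
    and e: "e \<longlonglongrightarrow> 0" "\<And>n. 0 < e n" "\<And>n. e n \<le> 1/2"
  shows "uniform_limit UNIV (\<lambda>n. Qop_trunc \<alpha> (e n) f) (Qop \<alpha> f) sequentially"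
proof -
  obtain K where K: "\<And>x \<epsilon>. 0 < \<epsilon> \<Longrightarrow> \<epsilon> \<le> 1/2 \<Longrightarrow>
      norm (Qop_trunc \<alpha> \<epsilon> f x - Qop \<alpha> f x) \<le> K * \<epsilon> powr (3 - \<alpha>)"
    using Qop_trunc_approx[OF sc \<open>\<alpha> < 3\<close>] by blast
  have "(\<lambda>n. K * e n powr (3 - \<alpha>)) \<longlonglongrightarrow> K * 0"
    using e \<open>\<alpha> < 3\<close>
    by (intro tendsto_intros tendsto_zero_powrI) (auto intro: less_imp_le always_eventually)
  then show ?thesis
    unfolding uniform_limit_iff dist_norm
    by (auto dest!: order_tendstoD(2) elim!: eventually_mono intro: le_less_trans K e)
qed

section \<open>Differentiation commutes with \<open>Q\<^sup>\<alpha>\<close>\<close>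

lemma has_vector_derivative_Qsym:
  fixes f :: "real \<Rightarrow> real^'n"
  assumes sc: "smooth_closed_curve f"
  shows "((\<lambda>x. Qsym \<alpha> f x w) has_vector_derivative Qsym \<alpha> (dn 1 f) x w) (at x)"
proof -
  have shift: "((\<lambda>x. f (x + s)) has_vector_derivative dn 1 f (x + s)) (at x)" for s
  proof -
    have "((\<lambda>x. x + s) has_real_derivative 1) (at x)"
      by (auto intro!: derivative_eq_intros)
    from smooth_closed_curve_derivative_compose[OF sc this, of 0] show ?thesis
      by simp
  qed
  have "dn 2 (dn 1 f) = dn 3 f"
    by (simp flip: dn_add)
  then show ?thesis
    unfolding Qsym_def
    using smooth_closed_curve_derivative[OF sc, of 0] smooth_closed_curve_derivative[OF sc, of 2]
      shift[of w] shift[of "- w"]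
    by (auto intro!: derivative_eq_intros simp: eval_nat_numeral)
qed

lemma has_vector_derivative_uniform_limit:
  fixes F F' :: "nat \<Rightarrow> real \<Rightarrow> 'a::banach"
  assumes "\<And>n x. (F n has_vector_derivative F' n x) (at x)"
    and "\<And>x. (\<lambda>n. F n x) \<longlonglongrightarrow> f x"
    and "uniform_limit UNIV F' f' sequentially"
  shows "(f has_vector_derivative f' x) (at x)"
proof -
  have "\<exists>g. \<forall>x\<in>UNIV. (\<lambda>n. F n x) \<longlonglongrightarrow> g x \<and> (g has_derivative (\<lambda>h. h *\<^sub>R f' x)) (at x within UNIV)"
  proof (rule has_derivative_sequence[where f' = "\<lambda>n x h. h *\<^sub>R F' n x"])
    show "(F n has_derivative (\<lambda>h. h *\<^sub>R F' n x)) (at x within UNIV)" for n x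
      using assms(1) by (simp add: has_vector_derivative_def)
    show "\<forall>\<^sub>F n in sequentially. \<forall>x\<in>UNIV. \<forall>h. norm (h *\<^sub>R F' n x - h *\<^sub>R f' x) \<le> e * norm h"
      if "e > 0" for e
      using uniform_limitD[OF assms(3) that]
    proof (rule eventually_mono, intro ballI allI)
      fix n x h
      assume "\<forall>x\<in>UNIV. dist (F' n x) (f' x) < e"
      then have "norm (F' n x - f' x) \<le> e"
        by (simp add: dist_norm less_imp_le)
      then show "norm (h *\<^sub>R F' n x - h *\<^sub>R f' x) \<le> e * norm h"
        by (simp flip: scaleR_diff_right add: mult.commute[of e] mult_left_mono)
    qed
  qed (use assms(2) in auto)
  then obtain g where "\<And>x. (\<lambda>n. F n x) \<longlonglongrightarrow> g x" "(g has_derivative (\<lambda>h. h *\<^sub>R f' x)) (at x)"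
    by auto
  moreover have "g = f"
    using calculation(1) assms(2) LIMSEQ_unique by blast
  ultimately show ?thesis
    by (simp add: has_vector_derivative_def)
qed

lemma Qop_trunc_has_vector_derivative:
  fixes f :: "real \<Rightarrow> real^'n"
  assumes sc: "smooth_closed_curve f" and "0 < \<epsilon>"
  shows "(Qop_trunc \<alpha> \<epsilon> f has_vector_derivative Qop_trunc \<alpha> \<epsilon> (dn 1 f) x) (at x)"
proof -
  have "((\<lambda>x. integral (cbox \<epsilon> (1/2)) (Qsym \<alpha> f x)) has_vector_derivative
      integral (cbox \<epsilon> (1/2)) (Qsym \<alpha> (dn 1 f) x)) (at x within UNIV)"
  proof (rule leibniz_rule_vector_derivative)
    show "((\<lambda>x. Qsym \<alpha> f x t) has_vector_derivative Qsym \<alpha> (dn 1 f) x t) (at x within UNIV)" for x t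
      using has_vector_derivative_Qsym[OF sc] by simp
    show "Qsym \<alpha> f x integrable_on cbox \<epsilon> (1/2)" for x
      unfolding cbox_interval using \<open>0 < \<epsilon>\<close>
      by (intro integrable_continuous_interval continuous_on_Qsym_right[OF sc]) auto
    have "continuous_on (UNIV \<times> cbox \<epsilon> (1/2)) (\<lambda>p. Qsym \<alpha> (dn 1 f) (fst p) (snd p))"
      using \<open>0 < \<epsilon>\<close> smooth_closed_curve_dn[OF sc]
      by (intro continuous_on_Qsym) (auto simp: cbox_interval)
    then show "continuous_on (UNIV \<times> cbox \<epsilon> (1/2)) (\<lambda>(x, t). Qsym \<alpha> (dn 1 f) x t)"
      by (simp add: case_prod_beta)
  qed auto
  then show ?thesis
    by (simp add: Qop_trunc_def[abs_def] cbox_interval)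
qed

lemma Qop_has_vector_derivative:
  fixes f :: "real \<Rightarrow> real^'n"
  assumes sc: "smooth_closed_curve f" and "\<alpha> < 3"
  shows "(Qop \<alpha> f has_vector_derivative Qop \<alpha> (dn 1 f) x) (at x)"
proof -
  define e where "e n = inverse (real (Suc n)) / 2" for n
  have e: "e \<longlonglongrightarrow> 0" "0 < e n" "e n \<le> 1/2" for n
    unfolding e_def using tendsto_divide_zero[OF LIMSEQ_inverse_real_of_nat, of 2]
    by (auto simp: field_simps)
  note limit = Qop_trunc_uniform_limit[OF _ \<open>\<alpha> < 3\<close> e]
  show ?thesis
  proof (rule has_vector_derivative_uniform_limit)
    show "(Qop_trunc \<alpha> (e n) f has_vector_derivative Qop_trunc \<alpha> (e n) (dn 1 f) x) (at x)" for n x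
      using Qop_trunc_has_vector_derivative[OF sc e(2)] .
    show "(\<lambda>n. Qop_trunc \<alpha> (e n) f x) \<longlonglongrightarrow> Qop \<alpha> f x" for x
      using tendsto_uniform_limitI[OF limit[OF sc]] by simp
    show "uniform_limit UNIV (\<lambda>n. Qop_trunc \<alpha> (e n) (dn 1 f)) (Qop \<alpha> (dn 1 f)) sequentially"
      using limit[OF smooth_closed_curve_dn[OF sc]] .
  qed
qed

lemma dn_Qop:
  fixes f :: "real \<Rightarrow> real^'n"
  assumes sc: "smooth_closed_curve f" and "\<alpha> < 3"
  shows "dn l (Qop \<alpha> f) = Qop \<alpha> (dn l f)"
proof (induction l)
  case (Suc l)
  have "dn (Suc l) (Qop \<alpha> f) = (\<lambda>x. vector_derivative (Qop \<alpha> (dn l f)) (at x))"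
    using Suc by (simp add: dn_Suc)
  also have "\<dots> = Qop \<alpha> (dn 1 (dn l f))"
    using Qop_has_vector_derivative[OF smooth_closed_curve_dn[OF sc] \<open>\<alpha> < 3\<close>]
    by (intro ext vector_derivative_at)
  finally show ?case
    by (simp flip: dn_add)
qed simp

section \<open>Fourier coefficients\<close>

definition fourier_kernel :: "int \<Rightarrow> real \<Rightarrow> complex" where
  "fourier_kernel k x = exp (- (2 * of_real pi * \<i> * of_int k * of_real x))"

lemma fourier_coeff_eq:
  "fourier_coeff f k i = integral {0..1} (\<lambda>x. of_real (f x $ i) * fourier_kernel k x)"
  by (simp add: fourier_coeff_def fourier_kernel_def)

lemma has_vector_derivative_fourier_kernel:
  "(fourier_kernel k has_vector_derivative (- (2 * of_real pi * \<i> * of_int k)) * fourier_kernel k x) (at x)"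
proof -
  have "((\<lambda>z. exp (- (2 * of_real pi * \<i> * of_int k * z))) has_field_derivative
      exp (- (2 * of_real pi * \<i> * of_int k * of_real x)) * (- (2 * of_real pi * \<i> * of_int k)))
      (at (of_real x))"
    by (auto intro!: derivative_eq_intros)
  from has_vector_derivative_real_field[OF this] show ?thesis
    unfolding fourier_kernel_def by (simp add: mult.commute)
qed

lemma continuous_on_fourier_kernel: "continuous_on S (fourier_kernel k)"
  unfolding fourier_kernel_def by (intro continuous_intros)

lemma fourier_kernel_add: "fourier_kernel k (x + y) = fourier_kernel k x * fourier_kernel k y"
  unfolding fourier_kernel_def by (simp add: exp_add[symmetric] algebra_simps)

lemma fourier_kernel_periodic: "fourier_kernel k (x + 1) = fourier_kernel k x"
proof -
  have "fourier_kernel k 1 = exp ((2 * of_int (-k) * pi) * \<i>)"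
    unfolding fourier_kernel_def by (simp add: algebra_simps)
  also have "\<dots> = 1"
    by (rule exp_integer_2pi) auto
  finally show ?thesis
    by (simp add: fourier_kernel_add)
qed

lemma norm_fourier_kernel [simp]: "norm (fourier_kernel k x) = 1"
proof -
  have "- (2 * of_real pi * \<i> * of_int k * of_real x) = \<i> * of_real (- (2 * pi * k * x))"
    by simp
  then show ?thesis
    unfolding fourier_kernel_def by (simp only: norm_exp_i_times)
qed

lemma fourier_kernel_reflect_add:
  "fourier_kernel k (- w) + fourier_kernel k w = of_real (2 * cos (2 * pi * k * w))"
  unfolding fourier_kernel_def by (simp add: complex_eq_iff Re_exp Im_exp)

lemma fourier_integrand_integrable:
  fixes g :: "real \<Rightarrow> real^'n"
  assumes "continuous_on {0..1} g"
  shows "(\<lambda>x. of_real (g x $ i) * fourier_kernel k x) integrable_on {0..1}"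
proof -
  have "continuous_on {0..1} (\<lambda>x. g x $ i)"
    by (rule bounded_linear.continuous_on[OF bounded_linear_vec_nth assms])
  then show ?thesis
    by (intro integrable_continuous_interval continuous_on_mult continuous_on_of_real
        continuous_on_fourier_kernel)
qed

lemma has_vector_derivative_component:
  fixes f :: "real \<Rightarrow> real^'n"
  assumes "smooth_closed_curve f"
  shows "((\<lambda>x. complex_of_real (dn j f x $ i)) has_vector_derivative
           complex_of_real (dn (Suc j) f x $ i)) (at x)"
  using bounded_linear.has_vector_derivative[OF bounded_linear_of_real
      bounded_linear.has_vector_derivative[OF bounded_linear_vec_nth
        smooth_closed_curve_derivative[OF assms]]] .

lemma continuous_on_component:
  fixes f :: "real \<Rightarrow> real^'n"
  assumes "smooth_closed_curve f"
  shows "continuous_on S (\<lambda>x. complex_of_real (dn j f x $ i))"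
  using continuous_at_imp_continuous_on has_vector_derivative_continuous
    has_vector_derivative_component[OF assms] continuous_on_subset subset_UNIV
  by metis

lemma periodic_integral_shift:
  fixes G G' :: "real \<Rightarrow> 'a::banach"
  assumes G: "\<And>y. (G has_vector_derivative G' y) (at y)" and "continuous_on UNIV G'"
    and periodic: "\<And>y. G (y + 1) = G y"
  shows "integral {0..1} (\<lambda>x. G (x + w)) = integral {0..1} G"
proof -
  have shift: "((\<lambda>w. G (x + w)) has_vector_derivative G' (x + w)) (at w)" for x w
  proof -
    have "((\<lambda>w. x + w) has_vector_derivative 1) (at w)"
      by (auto intro!: derivative_eq_intros)
    from vector_diff_chain_at[OF this G] show ?thesis
      by (simp add: o_def)
  qed
  have "continuous_on UNIV G"
    by (metis G continuous_at_imp_continuous_on has_vector_derivative_continuous)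
  have derivative: "((\<lambda>w. integral (cbox 0 1) (\<lambda>x. G (x + w))) has_vector_derivative
      integral (cbox 0 1) (\<lambda>x. G' (x + w))) (at w within UNIV)" for w
  proof (rule leibniz_rule_vector_derivative)
    show "(\<lambda>x. G (x + w)) integrable_on cbox 0 1" for w
      unfolding cbox_interval
      by (intro integrable_continuous_interval continuous_on_compose2[OF \<open>continuous_on UNIV G\<close>])
        (auto intro!: continuous_intros)
    show "continuous_on (UNIV \<times> cbox 0 1) (\<lambda>(w, x). G' (x + w))"
      unfolding case_prod_beta
      by (rule continuous_on_compose2[OF \<open>continuous_on UNIV G'\<close>]) (auto intro!: continuous_intros)
  qed (simp_all add: shift)
  have "integral (cbox 0 1) (\<lambda>x. G' (x + w)) = 0" for w
  proof -
    have "((\<lambda>x. G (w + x)) has_vector_derivative G' (w + x)) (at x within {0..1})" for x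
      by (rule has_vector_derivative_at_within[OF shift])
    then have "((\<lambda>x. G' (x + w)) has_integral (G (1 + w) - G (0 + w))) {0..1}"
      using fundamental_theorem_of_calculus[of 0 1 "\<lambda>x. G (w + x)" "\<lambda>x. G' (w + x)"]
      by (simp add: add.commute)
    then show ?thesis
      using periodic[of w] by (simp add: cbox_interval integral_unique add.commute)
  qed
  then obtain c where "\<And>w. integral (cbox 0 1) (\<lambda>x. G (x + w)) = c"
    using has_derivative_zero_constant[of UNIV "\<lambda>w. integral (cbox 0 1) (\<lambda>x. G (x + w))"]
      derivative by (auto simp: has_vector_derivative_def)
  from this[of w] this[of 0] show ?thesis
    by (simp add: cbox_interval)
qed

lemma fourier_coeff_dn_Suc:
  fixes f :: "real \<Rightarrow> real^'n"
  assumes sc: "smooth_closed_curve f"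
  shows "fourier_coeff (dn (Suc j) f) k i = (2 * of_real pi * \<i> * of_int k) * fourier_coeff (dn j f) k i"
proof -
  define c where "c = 2 * of_real pi * \<i> * (of_int k :: complex)"
  define A where "A x = complex_of_real (dn j f x $ i)" for x
  define A' where "A' x = complex_of_real (dn (Suc j) f x $ i)" for x
  let ?E = "fourier_kernel k"
  have A: "(A has_vector_derivative A' x) (at x)" for x
    unfolding A_def A'_def by (rule has_vector_derivative_component[OF sc])
  have E: "(?E has_vector_derivative (- c) * ?E x) (at x)" for x
    unfolding c_def by (rule has_vector_derivative_fourier_kernel)
  have "((\<lambda>x. A x * ?E x) has_vector_derivative A x * ((- c) * ?E x) + A' x * ?E x) (at x within {0..1})"
    for x
    by (rule has_vector_derivative_at_within, intro has_vector_derivative_mult A E)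
  then have "((\<lambda>x. A x * ((- c) * ?E x) + A' x * ?E x) has_integral A 1 * ?E 1 - A 0 * ?E 0) {0..1}"
    by (intro fundamental_theorem_of_calculus) auto
  moreover have "A 1 * ?E 1 - A 0 * ?E 0 = 0"
    using smooth_closed_curve_periodic[OF sc, of j 0] fourier_kernel_periodic[of k 0]
    unfolding A_def by simp
  ultimately have by_parts: "((\<lambda>x. A x * ((- c) * ?E x) + A' x * ?E x) has_integral 0) {0..1}"
    by simp
  have "(\<lambda>x. A x * ?E x) integrable_on {0..1}"
    unfolding A_def
    by (intro integrable_continuous_interval continuous_on_mult continuous_on_component[OF sc]
        continuous_on_fourier_kernel)
  from has_integral_mult_right[OF integrable_integral[OF this], of "- c"]
  have "((\<lambda>x. A x * ((- c) * ?E x)) has_integral - c * integral {0..1} (\<lambda>x. A x * ?E x)) {0..1}"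
    by (simp add: mult.left_commute)
  from has_integral_diff[OF by_parts this]
  have "((\<lambda>x. A' x * ?E x) has_integral c * integral {0..1} (\<lambda>x. A x * ?E x)) {0..1}"
    by simp
  then show ?thesis
    unfolding fourier_coeff_eq A_def A'_def c_def by (simp add: integral_unique)
qed

lemma fourier_coeff_dn:
  fixes f :: "real \<Rightarrow> real^'n"
  assumes "smooth_closed_curve f"
  shows "fourier_coeff (dn j f) k i = (2 * of_real pi * \<i> * of_int k) ^ j * fourier_coeff f k i"
  by (induction j) (simp_all add: fourier_coeff_dn_Suc[OF assms])

lemma fourier_coeff_shift:
  fixes f :: "real \<Rightarrow> real^'n"
  assumes sc: "smooth_closed_curve f"
  shows "integral {0..1} (\<lambda>x. of_real (f (x + s) $ i) * fourier_kernel k x)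
    = fourier_kernel k (- s) * fourier_coeff f k i"
proof -
  define c where "c = 2 * of_real pi * \<i> * (of_int k :: complex)"
  define A where "A x = complex_of_real (f x $ i)" for x
  define A' where "A' x = complex_of_real (dn 1 f x $ i)" for x
  let ?E = "fourier_kernel k"
  define G where "G y = A y * (?E y * ?E (- s))" for y
  have "integral {0..1} (\<lambda>x. G (x + s)) = integral {0..1} G"
  proof (rule periodic_integral_shift)
    show "(G has_vector_derivative (A y * ((- c) * ?E y * ?E (- s)) + A' y * (?E y * ?E (- s)))) (at y)"
      for y
      unfolding G_def A_def A'_def c_def
      using has_vector_derivative_component[OF sc, of 0]
      by (intro has_vector_derivative_mult has_vector_derivative_mult_left
          has_vector_derivative_fourier_kernel) simp_all
    show "continuous_on UNIV (\<lambda>y. A y * ((- c) * ?E y * ?E (- s)) + A' y * (?E y * ?E (- s)))"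
      using continuous_on_component[OF sc, of _ 0] continuous_on_component[OF sc, of _ 1]
      unfolding A_def A'_def
      by (intro continuous_on_add continuous_on_mult continuous_on_const continuous_on_fourier_kernel)
        simp_all
    show "G (y + 1) = G y" for y
      unfolding G_def A_def
      using smooth_closed_curve_periodic[OF sc, of 0 y] fourier_kernel_periodic[of k y] by simp
  qed
  moreover have "G (x + s) = A (x + s) * ?E x" for x
  proof -
    have "?E s * ?E (- s) = 1"
      using fourier_kernel_add[of k s "- s"] by (simp add: fourier_kernel_def)
    then show ?thesis
      unfolding G_def fourier_kernel_add by (simp add: mult.assoc)
  qed
  moreover have "integral {0..1} G = ?E (- s) * integral {0..1} (\<lambda>x. A x * ?E x)"
    unfolding G_def by (simp add: ac_simps flip: integral_mult_right)
  ultimately show ?thesis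
    unfolding fourier_coeff_eq A_def by simp
qed

section \<open>The Fourier multiplier of \<open>Q\<^sup>\<alpha>\<close>\<close>

text \<open>Translation by \<open>\<plusminus>w\<close> multiplies the \<open>k\<close>-th Fourier coefficient by \<open>exp (\<plusminus>2\<pi>ikw)\<close>,
  so this is the multiplier of \<open>\<lambda>x. Qsym \<alpha> f x w\<close>.\<close>
definition Qsym_multiplier :: "real \<Rightarrow> int \<Rightarrow> real \<Rightarrow> real" where
  "Qsym_multiplier \<alpha> k w = 2 * w powr (-\<alpha>) * ((2 * cos (2 * pi * k * w) - 2) / w\<^sup>2 + 4 * pi\<^sup>2 * k\<^sup>2)"

definition Qop_trunc_multiplier :: "real \<Rightarrow> int \<Rightarrow> real \<Rightarrow> real" where
  "Qop_trunc_multiplier \<alpha> k \<epsilon> = integral {\<epsilon>..1/2} (Qsym_multiplier \<alpha> k)"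

lemma fourier_coeff_Qsym:
  fixes f :: "real \<Rightarrow> real^'n"
  assumes sc: "smooth_closed_curve f" and "w > 0"
  shows "fourier_coeff (\<lambda>x. Qsym \<alpha> f x w) k i = of_real (Qsym_multiplier \<alpha> k w) * fourier_coeff f k i"
proof -
  define F where "F = fourier_coeff f k i"
  define c where "c = 2 * of_real pi * \<i> * (of_int k :: complex)"
  define a where "a = complex_of_real (2 * w powr (-\<alpha>))"
  define b where "b = complex_of_real (1 / w\<^sup>2)"
  let ?E = "fourier_kernel k"
  have integrand: "of_real (Qsym \<alpha> f x w $ i) * ?E x
      = a * b * (of_real (f (x + w) $ i) * ?E x) + a * b * (of_real (f (x + - w) $ i) * ?E x)
        - 2 * a * b * (of_real (f x $ i) * ?E x) - a * (of_real (dn 2 f x $ i) * ?E x)" for x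
    by (simp add: Qsym_def a_def b_def algebra_simps)
  have integrable: "(\<lambda>x. of_real (dn j f (x + s) $ i) * ?E x) integrable_on {0..1}" for j s
    by (intro fourier_integrand_integrable smooth_closed_curve_continuous_compose[OF sc]
        continuous_intros)
  have "((\<lambda>x. of_real (Qsym \<alpha> f x w $ i) * ?E x) has_integral
      a * b * (?E (- w) * F) + a * b * (?E w * F) - 2 * a * b * F - a * (c ^ 2 * F)) {0..1}"
    unfolding integrand
    using integrable[of 0 w] integrable[of 0 "- w"] integrable[of 0 0] integrable[of 2 0]
      fourier_coeff_shift[OF sc, of w i k] fourier_coeff_shift[OF sc, of "- w" i k]
      fourier_coeff_dn[OF sc, of 2 k i]
    by (intro has_integral_diff has_integral_add has_integral_mult_right)
      (simp_all add: F_def c_def fourier_coeff_eq has_integral_integral)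
  moreover have "a * b * (?E (- w) * F) + a * b * (?E w * F) - 2 * a * b * F - a * (c ^ 2 * F)
      = of_real (Qsym_multiplier \<alpha> k w) * F"
  proof -
    have "c ^ 2 = - of_real (4 * pi\<^sup>2 * (real_of_int k)\<^sup>2)"
      unfolding c_def by (simp add: power2_eq_square algebra_simps)
    then have "a * b * (?E (- w) * F) + a * b * (?E w * F) - 2 * a * b * F - a * (c ^ 2 * F)
        = a * (b * (?E (- w) + ?E w) - 2 * b + of_real (4 * pi\<^sup>2 * k\<^sup>2)) * F"
      by (simp add: algebra_simps)
    also have "a * (b * (?E (- w) + ?E w) - 2 * b + of_real (4 * pi\<^sup>2 * k\<^sup>2))
        = of_real (Qsym_multiplier \<alpha> k w)"
      using \<open>w > 0\<close> unfolding fourier_kernel_reflect_add a_def b_def Qsym_multiplier_def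
      by (simp add: field_simps)
    finally show ?thesis .
  qed
  ultimately show ?thesis
    unfolding fourier_coeff_eq F_def by (simp add: integral_unique)
qed

lemma continuous_on_Qsym_multiplier: "0 < a \<Longrightarrow> continuous_on {a..b} (Qsym_multiplier \<alpha> k)"
  unfolding Qsym_multiplier_def by (intro continuous_intros) auto

lemma has_integral_component_of_real:
  fixes g :: "real \<Rightarrow> real^'n"
  assumes "g integrable_on S"
  shows "((\<lambda>x. complex_of_real (g x $ i)) has_integral of_real (integral S g $ i)) S"
proof -
  have "((\<lambda>x. g x $ i) has_integral integral S g $ i) S"
    unfolding integral_component_eq_cart[OF assms, symmetric]
    using integrable_component[OF assms, of "axis i 1"]
    by (intro integrable_integral) (simp add: cart_eq_inner_axis[symmetric])
  then show ?thesis
    by (rule has_integral_of_real)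
qed

lemma fourier_coeff_Qop_trunc:
  fixes f :: "real \<Rightarrow> real^'n"
  assumes sc: "smooth_closed_curve f" and "0 < \<epsilon>"
  shows "fourier_coeff (Qop_trunc \<alpha> \<epsilon> f) k i = of_real (Qop_trunc_multiplier \<alpha> k \<epsilon>) * fourier_coeff f k i"
proof -
  let ?E = "fourier_kernel k"
  define H where "H x w = complex_of_real (Qsym \<alpha> f x w $ i) * ?E x" for x w
  have "of_real (Qop_trunc \<alpha> \<epsilon> f x $ i) * ?E x = integral {\<epsilon>..1/2} (H x)" for x
  proof -
    have "Qsym \<alpha> f x integrable_on {\<epsilon>..1/2}"
      using \<open>0 < \<epsilon>\<close> by (intro integrable_continuous_interval continuous_on_Qsym_right[OF sc]) auto
    from has_integral_mult_left[OF has_integral_component_of_real[OF this, where i=i], of "?E x"]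
    show ?thesis
      unfolding H_def Qop_trunc_def by (rule integral_unique[symmetric])
  qed
  then have "fourier_coeff (Qop_trunc \<alpha> \<epsilon> f) k i = integral {0..1} (\<lambda>x. integral {\<epsilon>..1/2} (H x))"
    by (simp add: fourier_coeff_eq)
  also have "\<dots> = integral {\<epsilon>..1/2} (\<lambda>w. integral {0..1} (\<lambda>x. H x w))"
  proof -
    have "continuous_on (cbox (0, \<epsilon>) (1, 1/2)) (\<lambda>p. Qsym \<alpha> f (fst p) (snd p) $ i)"
      using \<open>0 < \<epsilon>\<close>
      by (intro bounded_linear.continuous_on[OF bounded_linear_vec_nth continuous_on_Qsym[OF sc]])
        (auto simp: cbox_Pair_eq cbox_interval)
    then have "continuous_on (cbox (0, \<epsilon>) (1, 1/2)) (\<lambda>(x, w). H x w)"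
      unfolding H_def case_prod_beta
      by (intro continuous_on_mult continuous_on_of_real
          continuous_on_compose2[OF continuous_on_fourier_kernel continuous_on_fst]) auto
    from integral_swap_continuous[OF this] show ?thesis
      by (simp add: cbox_interval)
  qed
  also have "\<dots> = integral {\<epsilon>..1/2} (\<lambda>w. of_real (Qsym_multiplier \<alpha> k w) * fourier_coeff f k i)"
  proof (rule integral_cong)
    fix w
    assume "w \<in> {\<epsilon>..1/2}"
    with \<open>0 < \<epsilon>\<close> fourier_coeff_Qsym[OF sc, of w \<alpha> k i]
    show "integral {0..1} (\<lambda>x. H x w) = of_real (Qsym_multiplier \<alpha> k w) * fourier_coeff f k i"
      unfolding fourier_coeff_eq H_def by simp
  qed
  also have "\<dots> = integral {\<epsilon>..1/2} (\<lambda>w. of_real (Qsym_multiplier \<alpha> k w)) * fourier_coeff f k i"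
    by (rule integral_mult_left)
  also have "integral {\<epsilon>..1/2} (\<lambda>w. of_real (Qsym_multiplier \<alpha> k w))
      = (of_real (Qop_trunc_multiplier \<alpha> k \<epsilon>) :: complex)"
    unfolding Qop_trunc_multiplier_def using \<open>0 < \<epsilon>\<close>
    by (intro integral_unique has_integral_of_real integrable_integral integrable_continuous_interval
        continuous_on_Qsym_multiplier)
  finally show ?thesis .
qed

lemma Qsym_multiplier_nonneg:
  assumes "w > 0"
  shows "0 \<le> Qsym_multiplier \<alpha> k w"
proof -
  have "cos (2 * pi * k * w) = 1 - 2 * sin (pi * k * w) ^ 2"
    using cos_double_sin[of "pi * k * w"] by (simp add: mult.assoc)
  moreover have "sin (pi * k * w) ^ 2 \<le> (pi * k * w) ^ 2"
    using abs_sin_x_le_abs_x[of "pi * k * w"] by (metis abs_ge_zero power2_abs power_mono)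
  ultimately have "- (4 * pi\<^sup>2 * k\<^sup>2) * w\<^sup>2 \<le> 2 * cos (2 * pi * k * w) - 2"
    by (simp add: power_mult_distrib)
  then have "- (4 * pi\<^sup>2 * k\<^sup>2) \<le> (2 * cos (2 * pi * k * w) - 2) / w\<^sup>2"
    using assms by (simp add: le_divide_eq)
  then show ?thesis
    unfolding Qsym_multiplier_def using assms by (intro mult_nonneg_nonneg) auto
qed

lemma pi_squared_gt_9: "9 < pi\<^sup>2"
proof -
  have "3 * 3 < pi * pi"
    using pi_gt3 by (intro mult_strict_mono) auto
  then show ?thesis
    by (simp add: power2_eq_square)
qed

text \<open>On this interval \<open>4/w\<^sup>2 \<le> 36 k\<^sup>2\<close>, so the cosine term costs at most \<open>36 k\<^sup>2\<close> of \<open>4\<pi>\<^sup>2k\<^sup>2\<close>.\<close>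
lemma Qsym_multiplier_ge:
  assumes "k \<noteq> 0" "0 < \<alpha>"
    and "1 / (3 * \<bar>real_of_int k\<bar>) \<le> w" "w \<le> 1 / (2 * \<bar>real_of_int k\<bar>)"
  shows "2 * \<bar>real_of_int k\<bar> powr \<alpha> * ((4 * pi\<^sup>2 - 36) * \<bar>real_of_int k\<bar>\<^sup>2)
    \<le> Qsym_multiplier \<alpha> k w"
proof -
  define K where "K = \<bar>real_of_int k\<bar>"
  have K: "K \<ge> 1"
    using assms(1) unfolding K_def by linarith
  have w: "1 / (3 * K) \<le> w" "w \<le> 1 / (2 * K)"
    using assms(3,4) unfolding K_def .
  moreover have "0 < 1 / (3 * K)"
    using K by simp
  ultimately have "w > 0"
    by linarith
  have iw: "K \<le> 1 / w" "1 / w \<le> 3 * K"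
    using w \<open>w > 0\<close> K by (auto simp: field_simps)
  have "K powr \<alpha> \<le> (1 / w) powr \<alpha>"
    using iw \<open>0 < \<alpha>\<close> K by (intro powr_mono2) auto
  also have "(1 / w) powr \<alpha> = w powr (-\<alpha>)"
    using \<open>w > 0\<close> by (simp add: powr_minus_divide powr_divide)
  finally have "K powr \<alpha> \<le> w powr (-\<alpha>)" .
  moreover have "(4 * pi\<^sup>2 - 36) * K\<^sup>2 \<le> (2 * cos (2 * pi * k * w) - 2) / w\<^sup>2 + 4 * pi\<^sup>2 * k\<^sup>2"
  proof -
    have "- 4 / w\<^sup>2 \<le> (2 * cos (2 * pi * k * w) - 2) / w\<^sup>2"
      using cos_ge_minus_one[of "2 * pi * k * w"] by (intro divide_right_mono) (linarith, simp)
    moreover have "4 / w\<^sup>2 \<le> 36 * K\<^sup>2"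
      using power_mono[OF iw(2), of 2] \<open>w > 0\<close> by (simp add: power_divide power_mult_distrib)
    moreover have "(real_of_int k)\<^sup>2 = K\<^sup>2"
      unfolding K_def by simp
    ultimately show ?thesis
      by (simp add: algebra_simps)
  qed
  moreover have "0 \<le> (4 * pi\<^sup>2 - 36) * K\<^sup>2"
    using pi_squared_gt_9 by simp
  ultimately show ?thesis
    unfolding Qsym_multiplier_def K_def[symmetric] by (simp add: mult_mono mult.assoc)
qed

lemma Qop_trunc_multiplier_ge:
  assumes "k \<noteq> 0" "0 < \<alpha>" "0 < \<epsilon>" "\<epsilon> \<le> 1 / (3 * \<bar>real_of_int k\<bar>)"
  shows "(4 * pi\<^sup>2 - 36) / 3 * \<bar>real_of_int k\<bar> powr (\<alpha> + 1) \<le> Qop_trunc_multiplier \<alpha> k \<epsilon>"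
proof -
  define K where "K = \<bar>real_of_int k\<bar>"
  have K: "K \<ge> 1"
    using assms(1) unfolding K_def by linarith
  let ?lo = "1 / (3 * K)" and ?hi = "1 / (2 * K)"
  let ?L = "2 * K powr \<alpha> * ((4 * pi\<^sup>2 - 36) * K\<^sup>2)"
  have "(4 * pi\<^sup>2 - 36) / 3 * K powr (\<alpha> + 1) = integral {?lo..?hi} (\<lambda>_. ?L)"
    using K by (simp add: powr_add field_simps power2_eq_square)
  also have "\<dots> \<le> integral {?lo..?hi} (Qsym_multiplier \<alpha> k)"
    using K assms(1,2)
    unfolding K_def
    by (intro integral_le integrable_continuous_interval continuous_on_Qsym_multiplier
        Qsym_multiplier_ge) auto
  also have "\<dots> \<le> Qop_trunc_multiplier \<alpha> k \<epsilon>"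
    unfolding Qop_trunc_multiplier_def
  proof (rule integral_subset_le)
    show "{?lo..?hi} \<subseteq> {\<epsilon>..1/2}"
      using K assms(4) unfolding K_def by (auto simp: field_simps)
    show "Qsym_multiplier \<alpha> k integrable_on {?lo..?hi}" "Qsym_multiplier \<alpha> k integrable_on {\<epsilon>..1/2}"
      using K assms(3) by (intro integrable_continuous_interval continuous_on_Qsym_multiplier; simp)+
  qed (use assms(3) in \<open>auto intro: Qsym_multiplier_nonneg\<close>)
  finally show ?thesis
    unfolding K_def .
qed

lemma norm_fourier_coeff_diff_le:
  fixes g h :: "real \<Rightarrow> real^'n"
  assumes "continuous_on {0..1} g" "continuous_on {0..1} h" and B: "\<And>x. norm (g x - h x) \<le> B"
  shows "norm (fourier_coeff g k i - fourier_coeff h k i) \<le> B"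
proof -
  have "fourier_coeff g k i - fourier_coeff h k i
      = integral {0..1} (\<lambda>x. of_real ((g x - h x) $ i) * fourier_kernel k x)"
    unfolding fourier_coeff_eq
    using fourier_integrand_integrable[OF assms(1)] fourier_integrand_integrable[OF assms(2)]
    by (simp add: integral_diff[symmetric] left_diff_distrib)
  also have "norm \<dots> \<le> integral {0..1} (\<lambda>x::real. B)"
  proof (rule Henstock_Kurzweil_Integration.integral_norm_bound_integral)
    show "(\<lambda>x. of_real ((g x - h x) $ i) * fourier_kernel k x) integrable_on {0..1}"
      using assms(1,2) by (intro fourier_integrand_integrable continuous_on_diff)
    show "norm (of_real ((g x - h x) $ i) * fourier_kernel k x) \<le> B" for x
      using component_le_norm_cart[of "g x - h x" i] B[of x]
      by (simp add: norm_mult flip: of_real_diff)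
  qed auto
  finally show ?thesis
    by simp
qed

lemma fourier_coeff_Qop_trunc_tendsto:
  fixes f :: "real \<Rightarrow> real^'n"
  assumes sc: "smooth_closed_curve f" and "\<alpha> < 3"
  shows "((\<lambda>\<epsilon>. fourier_coeff (Qop_trunc \<alpha> \<epsilon> f) k i) \<longlongrightarrow> fourier_coeff (Qop \<alpha> f) k i) (at_right 0)"
proof -
  obtain K where K: "\<And>x \<epsilon>. 0 < \<epsilon> \<Longrightarrow> \<epsilon> \<le> 1/2 \<Longrightarrow>
      norm (Qop_trunc \<alpha> \<epsilon> f x - Qop \<alpha> f x) \<le> K * \<epsilon> powr (3 - \<alpha>)"
    using Qop_trunc_approx[OF sc \<open>\<alpha> < 3\<close>] by blast
  have "continuous_on {0..1} (Qop \<alpha> f)"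
    using Qop_has_vector_derivative[OF sc \<open>\<alpha> < 3\<close>]
    by (meson continuous_at_imp_continuous_on has_vector_derivative_continuous)
  moreover have "continuous_on {0..1} (Qop_trunc \<alpha> \<epsilon> f)" if "0 < \<epsilon>" for \<epsilon>
    using Qop_trunc_has_vector_derivative[OF sc that]
    by (meson continuous_at_imp_continuous_on has_vector_derivative_continuous)
  ultimately have bound: "norm (fourier_coeff (Qop_trunc \<alpha> \<epsilon> f) k i - fourier_coeff (Qop \<alpha> f) k i)
      \<le> K * \<epsilon> powr (3 - \<alpha>)" if "\<epsilon> \<in> {0<..<1/2}" for \<epsilon>
    using that K by (intro norm_fourier_coeff_diff_le) auto
  have "\<forall>\<^sub>F \<epsilon> in at_right (0::real). 0 \<le> \<epsilon>"
    by (rule eventually_at_rightI[of 0 1]) auto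
  then have "((\<lambda>\<epsilon>. K * \<epsilon> powr (3 - \<alpha>)) \<longlongrightarrow> K * 0) (at_right 0)"
    using \<open>\<alpha> < 3\<close> by (intro tendsto_intros tendsto_zero_powrI) auto
  then have "((\<lambda>\<epsilon>. fourier_coeff (Qop_trunc \<alpha> \<epsilon> f) k i - fourier_coeff (Qop \<alpha> f) k i) \<longlongrightarrow> 0) (at_right 0)"
    by (intro Lim_null_comparison[OF eventually_at_rightI[of 0 "1/2", OF bound]]) simp_all
  then show ?thesis
    by (simp add: Lim_null[symmetric])
qed

lemma norm_fourier_coeff_Qop_ge:
  fixes f :: "real \<Rightarrow> real^'n"
  assumes sc: "smooth_closed_curve f" and "2 < \<alpha>" "\<alpha> < 3" and "k \<noteq> 0"
  shows "(4 * pi\<^sup>2 - 36) / 3 * \<bar>real_of_int k\<bar> powr (\<alpha> + 1) * norm (fourier_coeff f k i)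
         \<le> norm (fourier_coeff (Qop \<alpha> f) k i)"
proof (rule tendsto_lowerbound[OF tendsto_norm[OF fourier_coeff_Qop_trunc_tendsto[OF sc \<open>\<alpha> < 3\<close>]]])
  have "\<bar>real_of_int k\<bar> \<ge> 1"
    using \<open>k \<noteq> 0\<close> by linarith
  then show "\<forall>\<^sub>F \<epsilon> in at_right 0. (4 * pi\<^sup>2 - 36) / 3 * \<bar>real_of_int k\<bar> powr (\<alpha> + 1) * norm (fourier_coeff f k i)
      \<le> norm (fourier_coeff (Qop_trunc \<alpha> \<epsilon> f) k i)"
  proof (intro eventually_at_rightI[of 0 "1 / (3 * \<bar>real_of_int k\<bar>)"])
    fix \<epsilon> :: real
    assume "\<epsilon> \<in> {0<..<1 / (3 * \<bar>real_of_int k\<bar>)}"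
    then have "(4 * pi\<^sup>2 - 36) / 3 * \<bar>real_of_int k\<bar> powr (\<alpha> + 1) \<le> \<bar>Qop_trunc_multiplier \<alpha> k \<epsilon>\<bar>"
      using Qop_trunc_multiplier_ge[OF \<open>k \<noteq> 0\<close>, of \<alpha> \<epsilon>] \<open>2 < \<alpha>\<close> by auto
    from mult_right_mono[OF this norm_ge_zero[of "fourier_coeff f k i"]] \<open>\<epsilon> \<in> _\<close>
    show "(4 * pi\<^sup>2 - 36) / 3 * \<bar>real_of_int k\<bar> powr (\<alpha> + 1) * norm (fourier_coeff f k i)
        \<le> norm (fourier_coeff (Qop_trunc \<alpha> \<epsilon> f) k i)"
      by (simp add: fourier_coeff_Qop_trunc[OF sc] norm_mult)
  qed simp
qed simp

section \<open>Sobolev norms\<close>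

lemma fourier_coeff_norm_sq_nonneg: "0 \<le> fourier_coeff_norm_sq f k"
  unfolding fourier_coeff_norm_sq_def by (intro sum_nonneg) auto

lemma fourier_coeff_norm_sq_dn:
  fixes f :: "real \<Rightarrow> real^'n"
  assumes "smooth_closed_curve f"
  shows "fourier_coeff_norm_sq (dn j f) k = (2 * pi * real_of_int k) ^ (2 * j) * fourier_coeff_norm_sq f k"
proof -
  have "(cmod (2 * of_real pi * \<i> * of_int k))\<^sup>2 = (2 * pi * real_of_int k)\<^sup>2"
    by (simp add: norm_mult power_mult_distrib)
  then have "(cmod ((2 * of_real pi * \<i> * of_int k) ^ j * z))\<^sup>2
      = (2 * pi * real_of_int k) ^ (2 * j) * (cmod z)\<^sup>2" for z
  proof -
    have "(cmod ((2 * of_real pi * \<i> * of_int k) ^ j))\<^sup>2 = ((cmod (2 * of_real pi * \<i> * of_int k))\<^sup>2) ^ j"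
      unfolding norm_power by (metis power_mult mult.commute)
    also have "\<dots> = (2 * pi * real_of_int k) ^ (2 * j)"
      by (simp add: \<open>_ = (2 * pi * real_of_int k)\<^sup>2\<close> power_mult)
    finally show ?thesis
      by (simp add: norm_mult power_mult_distrib)
  qed
  then show ?thesis
    unfolding fourier_coeff_norm_sq_def fourier_coeff_dn[OF assms] by (simp add: sum_distrib_left)
qed

lemma fourier_coeff_norm_sq_Qop_ge:
  fixes f :: "real \<Rightarrow> real^'n"
  assumes "smooth_closed_curve f" and "2 < \<alpha>" "\<alpha> < 3" and "k \<noteq> 0"
  shows "((4 * pi\<^sup>2 - 36) / 3 * \<bar>real_of_int k\<bar> powr (\<alpha> + 1))\<^sup>2 * fourier_coeff_norm_sq f k
         \<le> fourier_coeff_norm_sq (Qop \<alpha> f) k"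
proof -
  have "((4 * pi\<^sup>2 - 36) / 3 * \<bar>real_of_int k\<bar> powr (\<alpha> + 1))\<^sup>2 * (norm (fourier_coeff f k i))\<^sup>2
      \<le> (norm (fourier_coeff (Qop \<alpha> f) k i))\<^sup>2" for i
    unfolding power_mult_distrib[symmetric]
    using norm_fourier_coeff_Qop_ge[OF assms, of i] pi_squared_gt_9 by (intro power_mono) auto
  then show ?thesis
    unfolding fourier_coeff_norm_sq_def sum_distrib_left by (intro sum_mono)
qed

lemma Sobolev_weight_le:
  fixes x :: real
  assumes "1 \<le> \<bar>x\<bar>" and "2 \<le> \<alpha>"
  shows "(1 + x\<^sup>2) powr (\<alpha> - 2) * x ^ 6 \<le> 2 powr (\<alpha> - 2) * (\<bar>x\<bar> powr (\<alpha> + 1))\<^sup>2"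
proof -
  have "(1 + x\<^sup>2) powr (\<alpha> - 2) \<le> (2 * x\<^sup>2) powr (\<alpha> - 2)"
    using assms one_le_power[of "\<bar>x\<bar>" 2] by (intro powr_mono2) auto
  also have "\<dots> = 2 powr (\<alpha> - 2) * \<bar>x\<bar> powr (2 * (\<alpha> - 2))"
  proof -
    have "x\<^sup>2 = \<bar>x\<bar> powr 2"
      using assms by (simp add: powr_numeral)
    then show ?thesis
      by (simp only: powr_mult powr_powr)
  qed
  finally have "(1 + x\<^sup>2) powr (\<alpha> - 2) * \<bar>x\<bar> ^ 6 \<le> 2 powr (\<alpha> - 2) * (\<bar>x\<bar> powr (2 * (\<alpha> - 2)) * \<bar>x\<bar> ^ 6)"
    unfolding mult.assoc[symmetric] by (rule mult_right_mono) simp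
  also have "\<bar>x\<bar> powr (2 * (\<alpha> - 2)) * \<bar>x\<bar> ^ 6 = (\<bar>x\<bar> powr (\<alpha> + 1))\<^sup>2"
  proof -
    have "\<bar>x\<bar> ^ 6 = \<bar>x\<bar> powr (real 6)"
      using assms by (subst powr_realpow) auto
    then have "\<bar>x\<bar> powr (2 * (\<alpha> - 2)) * \<bar>x\<bar> ^ 6 = \<bar>x\<bar> powr ((\<alpha> + 1) + (\<alpha> + 1))"
      by (simp only: powr_add[symmetric]) (simp add: algebra_simps)
    then show ?thesis
      by (simp only: powr_add power2_eq_square)
  qed
  finally show ?thesis
    by (simp add: power_even_abs_numeral)
qed

text \<open>\<open>(2\<pi>)\<^sup>6\<close> from three derivatives, \<open>2 powr (\<alpha> - 2)\<close> from \<open>1 + k\<^sup>2 \<le> 2k\<^sup>2\<close>, and the square of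
  the constant in the lower bound for the multiplier.\<close>
definition Qop_inverse_const :: "real \<Rightarrow> real" where
  "Qop_inverse_const \<alpha> = (2 * pi) ^ 6 * 2 powr (\<alpha> - 2) / ((4 * pi\<^sup>2 - 36) / 3)\<^sup>2"

lemma Qop_inverse_const_pos: "0 < Qop_inverse_const \<alpha>"
  unfolding Qop_inverse_const_def using pi_squared_gt_9 by simp

lemma Sobolev_weighted_dn3_le_Qop:
  fixes f :: "real \<Rightarrow> real^'n"
  assumes sc: "smooth_closed_curve f" and \<alpha>: "2 < \<alpha>" "\<alpha> < 3"
  shows "(1 + (real_of_int k)\<^sup>2) powr (m + \<alpha> - 2) * fourier_coeff_norm_sq (dn 3 f) k
         \<le> Qop_inverse_const \<alpha> * ((1 + (real_of_int k)\<^sup>2) powr m * fourier_coeff_norm_sq (Qop \<alpha> f) k)"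
proof (cases "k = 0")
  case True
  then show ?thesis
    using Qop_inverse_const_pos[of \<alpha>] fourier_coeff_norm_sq_nonneg[of "Qop \<alpha> f" 0]
    by (simp add: fourier_coeff_norm_sq_dn[OF sc])
next
  case False
  define P where "P = (1 + (real_of_int k)\<^sup>2) powr m"
  define c0 where "c0 = (4 * pi\<^sup>2 - 36) / 3"
  define c where "c = c0 * \<bar>real_of_int k\<bar> powr (\<alpha> + 1)"
  have "c0 > 0"
    unfolding c0_def using pi_squared_gt_9 by simp
  have "P \<ge> 0" "fourier_coeff_norm_sq f k \<ge> 0"
    unfolding P_def by (auto simp: fourier_coeff_norm_sq_nonneg)
  have "(1 + (real_of_int k)\<^sup>2) powr (m + \<alpha> - 2) * fourier_coeff_norm_sq (dn 3 f) k
      = P * ((1 + (real_of_int k)\<^sup>2) powr (\<alpha> - 2) * (real_of_int k) ^ 6) * ((2 * pi) ^ 6 * fourier_coeff_norm_sq f k)"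
    unfolding P_def fourier_coeff_norm_sq_dn[OF sc]
    by (simp add: powr_add[symmetric] add_diff_eq power_mult_distrib ac_simps)
  also have "\<dots> \<le> P * (2 powr (\<alpha> - 2) * (\<bar>real_of_int k\<bar> powr (\<alpha> + 1))\<^sup>2) * ((2 * pi) ^ 6 * fourier_coeff_norm_sq f k)"
    using Sobolev_weight_le[of "real_of_int k" \<alpha>] False \<alpha> \<open>P \<ge> 0\<close> \<open>fourier_coeff_norm_sq f k \<ge> 0\<close>
    by (intro mult_right_mono mult_left_mono) auto
  also have "\<dots> = P * (Qop_inverse_const \<alpha> * (c\<^sup>2 * fourier_coeff_norm_sq f k))"
    unfolding Qop_inverse_const_def c_def c0_def[symmetric] using \<open>c0 > 0\<close>
    by (simp add: field_simps power_mult_distrib)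
  also have "\<dots> \<le> P * (Qop_inverse_const \<alpha> * fourier_coeff_norm_sq (Qop \<alpha> f) k)"
    using fourier_coeff_norm_sq_Qop_ge[OF sc \<alpha> False] Qop_inverse_const_pos[of \<alpha>] \<open>P \<ge> 0\<close>
    unfolding c_def c0_def by (intro mult_left_mono) auto
  finally show ?thesis
    unfolding P_def by (simp add: ac_simps)
qed

lemma Hs_norm_le_scaled:
  fixes f g :: "real \<Rightarrow> real^'n"
  assumes "0 < C"
    and le: "\<And>k. (1 + (real_of_int k)\<^sup>2) powr s * fourier_coeff_norm_sq f k
                \<le> C * ((1 + (real_of_int k)\<^sup>2) powr t * fourier_coeff_norm_sq g k)"
  shows "Hs_norm s f \<le> ereal (sqrt C) * Hs_norm t g"
proof -
  define u where "u k = (1 + (real_of_int k)\<^sup>2) powr s * fourier_coeff_norm_sq f k" for k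
  define v where "v k = (1 + (real_of_int k)\<^sup>2) powr t * fourier_coeff_norm_sq g k" for k
  have "u k \<ge> 0" for k
    unfolding u_def by (simp add: fourier_coeff_norm_sq_nonneg)
  have Hs: "Hs_norm s f = (if u summable_on UNIV then ereal (sqrt (infsum u UNIV)) else \<infinity>)"
    "Hs_norm t g = (if v summable_on UNIV then ereal (sqrt (infsum v UNIV)) else \<infinity>)"
    unfolding Hs_norm_def Let_def u_def[abs_def] v_def[abs_def] by simp_all
  show ?thesis
  proof (cases "v summable_on UNIV")
    case False
    then show ?thesis
      using \<open>0 < C\<close> by (simp add: Hs)
  next
    case True
    then have Cv: "(\<lambda>k. C * v k) summable_on UNIV"
      by (rule summable_on_cmult_right)
    have u: "u summable_on UNIV"
      by (rule summable_on_comparison_test[OF Cv]) (use le \<open>\<And>k. u k \<ge> 0\<close> in \<open>auto simp: u_def v_def\<close>)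
    have "infsum u UNIV \<le> C * infsum v UNIV"
      using infsum_mono[OF u Cv] le infsum_cmult_right[OF True, of C] by (simp add: u_def v_def)
    then have "sqrt (infsum u UNIV) \<le> sqrt C * sqrt (infsum v UNIV)"
      by (simp flip: real_sqrt_mult)
    then show ?thesis
      using u True by (simp add: Hs)
  qed
qed

theorem corollary4p2:
  fixes \<alpha> :: real
  assumes "2 < \<alpha>" and "\<alpha> < 3"
  shows "\<exists>C>0. \<forall>(\<gamma>::real \<Rightarrow> real^'n) (l::nat) (m::real).
           smooth_closed_curve \<gamma> \<longrightarrow> 0 \<le> m \<longrightarrow>
           Hs_norm (m + \<alpha> - 2) (dn (l + 3) \<gamma>) \<le> ereal C * Hs_norm m (dn l (Qop \<alpha> \<gamma>))"
proof (intro exI[of _ "sqrt (Qop_inverse_const \<alpha>)"] conjI allI impI)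
  show "0 < sqrt (Qop_inverse_const \<alpha>)"
    using Qop_inverse_const_pos by simp
  fix \<gamma> :: "real \<Rightarrow> real^'n" and l :: nat and m :: real
  assume \<gamma>: "smooth_closed_curve \<gamma>"
  \<comment> \<open>the estimate holds for every real \<open>m\<close>\<close>
  then have "dn (l + 3) \<gamma> = dn 3 (dn l \<gamma>)" "dn l (Qop \<alpha> \<gamma>) = Qop \<alpha> (dn l \<gamma>)"
    using dn_Qop[OF \<gamma> \<open>\<alpha> < 3\<close>] by (simp_all add: add.commute flip: dn_add)
  then show "Hs_norm (m + \<alpha> - 2) (dn (l + 3) \<gamma>) \<le> ereal (sqrt (Qop_inverse_const \<alpha>)) * Hs_norm m (dn l (Qop \<alpha> \<gamma>))"
    using Hs_norm_le_scaled[OF Qop_inverse_const_pos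
        Sobolev_weighted_dn3_le_Qop[OF smooth_closed_curve_dn[OF \<gamma>] assms]]
    by simp
qed

end
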